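(* Let $p>1$ and $0\le a<p-1$. For every nonnegative nonincreasing sequence $x=(x_n)_{n\ge1}$ with $\sum_{n=1}^\infty x_n^p n^a<\infty$, $$\|x\|_{\ell^p(n^a)}\;\le\;\frac{1}{\zeta(p-a)^{1/p}}\,\|Cx\|_{\ell^p(n^a)},$$ where $\zeta$ is the Riemann zeta function. Moreover, the constant $\zeta(p-a)^{-1/p}$ is optimal (it is attained, e.g., for the sequence $x=(1,0,0,\dots)$).
   Context: For $p>1$ and $a\in\mathbb R$, $\|x\|_{\ell^p(n^a)}=\bigl(\sum_{n=1}^\infty |x_n|^p n^a\bigr)^{1/p}$. The discrete Hardy (Cesàro) operator is $(Cx)_n=\frac1n\sum_{k=1}^n|x_k|$. *)

theory Defs
  imports "HOL-Analysis.Analysis"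
begin

text \<open>Sequences x = (x_n) for n \<ge> 1 are represented as functions nat \<Rightarrow> real;
  the value at index 0 is ignored by every definition below.\<close>

definition rzeta :: "real \<Rightarrow> real" where
  "rzeta s = (\<Sum>n. 1 / (real (Suc n)) powr s)"

definition wnorm :: "real \<Rightarrow> real \<Rightarrow> (nat \<Rightarrow> real) \<Rightarrow> ereal" where
  "wnorm p a x =
     (if summable (\<lambda>n. \<bar>x (Suc n)\<bar> powr p * real (Suc n) powr a)
      then ereal ((\<Sum>n. \<bar>x (Suc n)\<bar> powr p * real (Suc n) powr a) powr (1 / p))
      else \<infinity>)"

definition cesaro :: "(nat \<Rightarrow> real) \<Rightarrow> nat \<Rightarrow> real" where
  "cesaro x n = (1 / real n) * (\<Sum>k=1..n. \<bar>x k\<bar>)"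

definition admissible :: "real \<Rightarrow> real \<Rightarrow> (nat \<Rightarrow> real) \<Rightarrow> bool" where
  "admissible p a x \<longleftrightarrow>
     (\<forall>n\<ge>1. 0 \<le> x n) \<and> (\<forall>n\<ge>1. x (Suc n) \<le> x n) \<and>
     summable (\<lambda>n. x (Suc n) powr p * real (Suc n) powr a)"

end

theory Submission
  imports Defs
begin

text \<open>Let \<open>x\<close> be nonnegative and nonincreasing with partial sums \<open>S n\<close>. Since
  \<open>t \<mapsto> (t + c) powr p - t powr p\<close> is nondecreasing and \<open>S n \<ge> n * x (n + 1)\<close>, induction
  gives \<open>S n powr p \<ge> (\<Sum>k=1..n. (k powr p - (k - 1) powr p) * x k powr p)\<close>. Multiply by
  \<open>n powr (a - p)\<close>, sum over \<open>n\<close> and exchange the order of summation: by Abel summation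
  against the nonincreasing weights \<open>x k powr p\<close>, the inequality
  \<open>\<zeta>(p - a) * (\<Sum>k. k powr a * x k powr p) \<le> (\<Sum>n. n powr (a - p) * S n powr p)\<close>
  reduces to the case where \<open>x\<close> is the indicator of \<open>{1..N}\<close>. There the tail
  \<open>\<Sum>n>N. n powr (a - p)\<close> dominates the samples \<open>N * (m * N) powr (a - p)\<close>, \<open>m \<ge> 2\<close>, whose
  sum is \<open>N powr (1 + a - p) * (\<zeta>(p - a) - 1)\<close>, and \<open>a \<ge> 0\<close> finishes it. All sums are
  truncated (\<open>\<zeta>\<close> after \<open>L\<close> terms, the sum over \<open>n\<close> at \<open>L * K\<close>) and the limits
  \<open>L \<rightarrow> \<infinity>\<close>, \<open>K \<rightarrow> \<infinity>\<close> are taken at the end.\<close>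

lemma powr_add_minus_powr_mono:
  fixes A B c p :: real
  assumes "1 \<le> p" "0 < B" "B \<le> A" "0 \<le> c"
  shows "(B + c) powr p - B powr p \<le> (A + c) powr p - A powr p"
proof -
  have "(\<lambda>t. (t + c) powr p - t powr p) B \<le> (\<lambda>t. (t + c) powr p - t powr p) A"
  proof (rule DERIV_nonneg_imp_nondecreasing[OF assms(3)])
    fix t assume t: "B \<le> t" "t \<le> A"
    then have "0 < t" using assms by linarith
    have "((\<lambda>t. (t + c) powr p - t powr p)
        has_real_derivative p * (t + c) powr (p - 1) - p * t powr (p - 1)) (at t)"
      using \<open>0 < t\<close> assms by (auto intro!: derivative_eq_intros)
    moreover have "t powr (p - 1) \<le> (t + c) powr (p - 1)"
      using \<open>0 < t\<close> assms by (intro powr_mono2) auto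
    then have "0 \<le> p * (t + c) powr (p - 1) - p * t powr (p - 1)"
      using assms by (simp add: mult_left_mono)
    ultimately show "\<exists>y. ((\<lambda>t. (t + c) powr p - t powr p) has_real_derivative y) (at t) \<and> 0 \<le> y"
      by blast
  qed
  then show ?thesis by simp
qed

lemma powr_sum_ge_sum_increments:
  fixes x :: "nat \<Rightarrow> real" and p :: real
  assumes p: "1 \<le> p"
    and nonneg: "\<And>k. 1 \<le> k \<Longrightarrow> 0 \<le> x k"
    and dec: "\<And>k. 1 \<le> k \<Longrightarrow> x (Suc k) \<le> x k"
  shows "(\<Sum>k=1..n. (real k powr p - real (k - 1) powr p) * x k powr p) \<le> (\<Sum>k=1..n. x k) powr p"
proof (induction n)
  case 0
  then show ?case by simp
next
  case (Suc n)
  define S where "S = (\<Sum>k=1..n. x k)"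
  define t where "t = x (Suc n)"
  have "0 \<le> t" using nonneg by (simp add: t_def)
  have "real n * t \<le> S"
  proof -
    have "t \<le> x k" if "k \<in> {1..n}" for k
    proof -
      have "x (Suc n) \<le> x (Suc (k - 1))"
        by (rule lift_Suc_antimono_le[of "\<lambda>i. x (Suc i)"]) (use dec that in auto)
      then show ?thesis using that by (simp add: t_def)
    qed
    then show ?thesis using sum_mono[of "{1..n}" "\<lambda>_. t" x] by (simp add: S_def)
  qed
  have "(real (Suc n) powr p - real n powr p) * t powr p \<le> (S + t) powr p - S powr p"
  proof (cases "real n * t = 0")
    case True
    then show ?thesis using p by (auto simp: S_def)
  next
    case False
    then have "0 < real n * t" using \<open>0 \<le> t\<close> by simp
    from powr_add_minus_powr_mono[OF p this \<open>real n * t \<le> S\<close> \<open>0 \<le> t\<close>]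
    have "(real n * t + t) powr p - (real n * t) powr p \<le> (S + t) powr p - S powr p" .
    moreover have "real n * t + t = real (Suc n) * t" by (simp add: algebra_simps)
    then have "(real n * t + t) powr p = real (Suc n) powr p * t powr p"
      using \<open>0 \<le> t\<close> by (simp only: powr_mult of_nat_0_le_iff)
    ultimately show ?thesis using \<open>0 \<le> t\<close> by (simp add: powr_mult algebra_simps)
  qed
  then show ?case using Suc.IH by (simp add: S_def t_def)
qed

lemma abel_summation_nonneg:
  fixes e y :: "nat \<Rightarrow> real"
  assumes "\<And>N. N \<le> K \<Longrightarrow> 0 \<le> (\<Sum>k=1..N. e k)"
    and "\<And>k. 1 \<le> k \<Longrightarrow> k < K \<Longrightarrow> y (Suc k) \<le> y k"
    and "0 \<le> y K"
  shows "0 \<le> (\<Sum>k=1..K. e k * y k)"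
  using assms
proof (induction K arbitrary: y)
  case 0
  then show ?case by simp
next
  case (Suc K)
  have split: "(\<Sum>k=1..Suc K. e k * y k)
      = (\<Sum>k=1..K. e k * (y k - y (Suc K))) + y (Suc K) * (\<Sum>k=1..Suc K. e k)"
    by (simp add: algebra_simps sum_distrib_left sum_subtractf)
  have "0 \<le> (\<Sum>k=1..K. e k * (y k - y (Suc K)))"
  proof (cases "K = 0")
    case False
    then show ?thesis using Suc.prems by (intro Suc.IH) auto
  qed simp
  moreover have "0 \<le> y (Suc K) * (\<Sum>k=1..Suc K. e k)"
    using Suc.prems(1)[of "Suc K"] Suc.prems(3) by simp
  ultimately show ?case using split by linarith
qed

lemma sum_increments_mult_tail_sums:
  fixes D w :: "nat \<Rightarrow> real"
  assumes "D 0 = 0" and "N \<le> M"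
  shows "(\<Sum>k=1..N. (D k - D (k - 1)) * (\<Sum>n=k..M. w n))
       = (\<Sum>n=1..N. D n * w n) + D N * (\<Sum>n=Suc N..M. w n)"
  using assms(2)
proof (induction N)
  case 0
  then show ?case using assms(1) by simp
next
  case (Suc N)
  have "(\<Sum>n=Suc N..M. w n) = w (Suc N) + (\<Sum>n=Suc (Suc N)..M. w n)"
    using Suc.prems by (simp add: sum.atLeast_Suc_atMost)
  then show ?case using Suc by (simp add: algebra_simps)
qed

lemma sum_antimono_ge_block_samples:
  fixes f :: "nat \<Rightarrow> real"
  assumes antimono: "\<And>m n. 0 < m \<Longrightarrow> m \<le> n \<Longrightarrow> f n \<le> f m"
  shows "(\<Sum>m=2..L. real N * f (m * N)) \<le> (\<Sum>n=Suc N..L * N. f n)"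
proof (induction L)
  case 0
  then show ?case by simp
next
  case (Suc L)
  show ?case
  proof (cases "L = 0")
    case True
    then show ?thesis by simp
  next
    case False
    have "real N * f (Suc L * N) = (\<Sum>n=L*N+1..L*N+N. f (Suc L * N))"
      by simp
    also have "\<dots> \<le> (\<Sum>n=L*N+1..L*N+N. f n)"
      by (intro sum_mono antimono) auto
    also have "(\<Sum>n=Suc N..L*N. f n) + \<dots> = (\<Sum>n=Suc N..Suc L * N. f n)"
      using False sum.ub_add_nat[of "Suc N" "L * N" f N] by (simp add: add.commute)
    finally show ?thesis using Suc.IH False by simp
  qed
qed

lemma sum_mult_partial_sums_swap:
  fixes w c :: "nat \<Rightarrow> real"
  shows "(\<Sum>n=1..M. w n * (\<Sum>k=1..min n K. c k)) = (\<Sum>k=1..min M K. c k * (\<Sum>n=k..M. w n))"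
proof -
  have "(\<Sum>n=1..M. w n * (\<Sum>k=1..min n K. c k))
      = (\<Sum>n\<in>{1..M}. \<Sum>k\<in>{k\<in>{1..min M K}. k \<le> n}. w n * c k)"
    by (intro sum.cong) (auto simp: sum_distrib_left intro: sum.cong)
  also have "\<dots> = (\<Sum>k\<in>{1..min M K}. \<Sum>n\<in>{n\<in>{1..M}. k \<le> n}. w n * c k)"
    by (rule sum.swap_restrict) auto
  also have "\<dots> = (\<Sum>k=1..min M K. c k * (\<Sum>n=k..M. w n))"
    by (intro sum.cong) (auto simp: sum_distrib_left mult.commute intro: sum.cong)
  finally show ?thesis .
qed

lemma sum_powr_increments_mult_tail_ge:
  fixes a p :: real
  assumes "0 \<le> a" "a \<le> p" "1 \<le> L" "N \<le> K"
  shows "(\<Sum>m=1..L. real m powr (a - p)) * (\<Sum>k=1..N. real k powr a)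
       \<le> (\<Sum>k=1..N. (real k powr p - real (k - 1) powr p) * (\<Sum>n=k..L * K. real n powr (a - p)))"
proof -
  define w where "w n = real n powr (a - p)" for n :: nat
  define Z' where "Z' = (\<Sum>m=2..L. w m)"
  define A where "A = (\<Sum>k=1..N. real k powr a)"
  define T where "T = (\<Sum>n=Suc N..L * K. w n)"
  have "N \<le> L * K" using assms(3,4) by (metis dual_order.trans mult_1 mult_le_mono1)
  have "(\<Sum>k=1..N. (real k powr p - real (k - 1) powr p) * (\<Sum>n=k..L * K. w n))
      = (\<Sum>n=1..N. real n powr p * w n) + real N powr p * T"
    unfolding T_def by (rule sum_increments_mult_tail_sums[OF _ \<open>N \<le> L * K\<close>]) simp
  also have "(\<Sum>n=1..N. real n powr p * w n) = A"
    unfolding A_def w_def by (intro sum.cong) (auto simp flip: powr_add)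
  finally have rhs: "(\<Sum>k=1..N. (real k powr p - real (k - 1) powr p) * (\<Sum>n=k..L * K. w n))
      = A + real N powr p * T" .
  have "real N * real N powr (a - p) * Z' = (\<Sum>m=2..L. real N * w (m * N))"
    by (simp add: Z'_def w_def sum_distrib_left powr_mult algebra_simps)
  also have "\<dots> \<le> (\<Sum>n=Suc N..L * N. w n)"
    by (rule sum_antimono_ge_block_samples) (use assms(2) in \<open>auto simp: w_def intro: powr_mono2'\<close>)
  also have "\<dots> \<le> T"
    unfolding T_def by (rule sum_mono2) (use assms(4) in \<open>auto simp: w_def\<close>)
  finally have block: "real N * real N powr (a - p) * Z' \<le> T" .
  have "A \<le> real N * real N powr a"
    using sum_mono[of "{1..N}" "\<lambda>k. real k powr a" "\<lambda>_. real N powr a"] assms(1)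
    by (simp add: A_def powr_mono2)
  then have "A * Z' \<le> real N * real N powr a * Z'"
    by (rule mult_right_mono) (simp add: Z'_def w_def sum_nonneg)
  also have "\<dots> = real N powr p * (real N * real N powr (a - p) * Z')"
  proof -
    have "real N powr a = real N powr p * real N powr (a - p)" by (simp flip: powr_add)
    then show ?thesis by (simp add: algebra_simps)
  qed
  also have "\<dots> \<le> real N powr p * T"
    using block by (simp add: mult_left_mono)
  finally have "A * Z' \<le> real N powr p * T" .
  moreover have "(\<Sum>m=1..L. w m) = 1 + Z'"
    using assms(3) by (simp add: Z'_def w_def sum.atLeast_Suc_atMost numeral_2_eq_2)
  ultimately have "(\<Sum>m=1..L. w m) * A \<le> A + real N powr p * T"
    by (simp add: algebra_simps)
  then show ?thesis using rhs by (simp add: A_def w_def)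
qed

lemma sum_weighted_powr_le_partial_sums:
  fixes x :: "nat \<Rightarrow> real" and a p :: real
  assumes p: "1 \<le> p" and "0 \<le> a" "a \<le> p" "1 \<le> L"
    and nonneg: "\<And>k. 1 \<le> k \<Longrightarrow> 0 \<le> x k"
    and dec: "\<And>k. 1 \<le> k \<Longrightarrow> x (Suc k) \<le> x k"
  shows "(\<Sum>m=1..L. real m powr (a - p)) * (\<Sum>k=1..K. real k powr a * x k powr p)
       \<le> (\<Sum>n=1..L * K. real n powr (a - p) * (\<Sum>k=1..n. x k) powr p)"
proof -
  define d where "d k = real k powr p - real (k - 1) powr p" for k
  define w where "w n = real n powr (a - p)" for n
  define Z where "Z = (\<Sum>m=1..L. w m)"
  have d_nonneg: "0 \<le> d k" for k
    unfolding d_def using p by (simp add: powr_mono2)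
  have "Z * (\<Sum>k=1..K. real k powr a * x k powr p)
      \<le> (\<Sum>k=1..K. d k * x k powr p * (\<Sum>n=k..L * K. w n))"
  proof -
    have "0 \<le> (\<Sum>k=1..K. (d k * (\<Sum>n=k..L * K. w n) - Z * real k powr a) * x k powr p)"
    proof (rule abel_summation_nonneg)
      show "0 \<le> (\<Sum>k=1..N. d k * (\<Sum>n=k..L * K. w n) - Z * real k powr a)" if "N \<le> K" for N
        using sum_powr_increments_mult_tail_ge[OF assms(2-4) that]
        by (simp add: sum_subtractf sum_distrib_left d_def w_def Z_def)
      show "x (Suc k) powr p \<le> x k powr p" if "1 \<le> k" for k
        using nonneg dec that p by (intro powr_mono2) auto
    qed simp
    then show ?thesis by (simp add: algebra_simps sum_subtractf sum_distrib_left)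
  qed
  also have "\<dots> = (\<Sum>n=1..L * K. w n * (\<Sum>k=1..min n K. d k * x k powr p))"
    using sum_mult_partial_sums_swap[where w = w and M = "L * K" and K = K
        and c = "\<lambda>k. d k * x k powr p"] assms(4)
    by (simp add: min_absorb2)
  also have "\<dots> \<le> (\<Sum>n=1..L * K. w n * (\<Sum>k=1..n. x k) powr p)"
  proof (intro sum_mono mult_left_mono)
    fix n
    have "(\<Sum>k=1..min n K. d k * x k powr p) \<le> (\<Sum>k=1..n. d k * x k powr p)"
      by (rule sum_mono2) (use d_nonneg in auto)
    also have "\<dots> \<le> (\<Sum>k=1..n. x k) powr p"
      unfolding d_def by (rule powr_sum_ge_sum_increments[where x = x, OF p nonneg dec])
    finally show "(\<Sum>k=1..min n K. d k * x k powr p) \<le> (\<Sum>k=1..n. x k) powr p" .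
    show "0 \<le> w n" by (simp add: w_def)
  qed
  finally show ?thesis by (simp add: Z_def w_def)
qed

lemma cesaro_powr_mult_powr:
  fixes x :: "nat \<Rightarrow> real"
  assumes "0 < n" and "\<And>k. 1 \<le> k \<Longrightarrow> 0 \<le> x k"
  shows "\<bar>cesaro x n\<bar> powr p * real n powr a = real n powr (a - p) * (\<Sum>k=1..n. x k) powr p"
proof -
  have "(\<Sum>k=1..n. \<bar>x k\<bar>) = (\<Sum>k=1..n. x k)"
    using assms(2) by (intro sum.cong) auto
  moreover have "0 \<le> (\<Sum>k=1..n. x k)"
    using assms(2) by (intro sum_nonneg) auto
  ultimately show ?thesis
    using assms(1) by (simp add: cesaro_def powr_divide powr_diff)
qed

lemma summable_rzeta:
  assumes "1 < s"
  shows "summable (\<lambda>n. 1 / real (Suc n) powr s)"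
proof -
  have "summable (\<lambda>n. real n powr (- s))"
    using summable_real_powr_iff[of "- s"] assms by simp
  then show ?thesis
    by (subst (asm) summable_Suc_iff [symmetric]) (simp add: powr_minus_divide)
qed

lemma rzeta_pos: "1 < s \<Longrightarrow> 0 < rzeta s"
  unfolding rzeta_def by (rule suminf_pos[OF summable_rzeta]) auto

lemma rzeta_partial_sums:
  assumes "1 < s"
  shows "(\<lambda>L. \<Sum>m=1..L. real m powr (- s)) \<longlonglongrightarrow> rzeta s"
  using summable_LIMSEQ[OF summable_rzeta[OF assms]]
  by (simp add: rzeta_def sum.atLeast1_atMost_eq powr_minus_divide)

lemma rzeta_mult_suminf_le_cesaro:
  fixes x :: "nat \<Rightarrow> real" and a p :: real
  assumes "1 < p" "0 \<le> a" "a < p - 1" "admissible p a x"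
    and summable_cesaro: "summable (\<lambda>n. \<bar>cesaro x (Suc n)\<bar> powr p * real (Suc n) powr a)"
  shows "rzeta (p - a) * (\<Sum>n. x (Suc n) powr p * real (Suc n) powr a)
       \<le> (\<Sum>n. \<bar>cesaro x (Suc n)\<bar> powr p * real (Suc n) powr a)"
proof -
  define f where "f = (\<lambda>n. x (Suc n) powr p * real (Suc n) powr a)"
  define g where "g = (\<lambda>n. \<bar>cesaro x (Suc n)\<bar> powr p * real (Suc n) powr a)"
  have nonneg: "\<And>k. 1 \<le> k \<Longrightarrow> 0 \<le> x k" and dec: "\<And>k. 1 \<le> k \<Longrightarrow> x (Suc k) \<le> x k"
    and "summable f"
    using assms(4) by (auto simp: admissible_def f_def)
  have partial: "(\<Sum>m=1..L. real m powr (a - p)) * (\<Sum>k<K. f k) \<le> suminf g" if "1 \<le> L" for L K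
  proof -
    have "(\<Sum>k<K. f k) = (\<Sum>k=1..K. real k powr a * x k powr p)"
      by (simp add: f_def sum.atLeast1_atMost_eq mult.commute)
    then have "(\<Sum>m=1..L. real m powr (a - p)) * (\<Sum>k<K. f k)
        \<le> (\<Sum>n=1..L * K. real n powr (a - p) * (\<Sum>k=1..n. x k) powr p)"
      using sum_weighted_powr_le_partial_sums[where x = x and K = K, OF _ _ _ that nonneg dec] assms(1-3)
      by simp
    also have "\<dots> = (\<Sum>n<L * K. real (Suc n) powr (a - p) * (\<Sum>k=1..Suc n. x k) powr p)"
      by (rule sum.atLeast1_atMost_eq[unfolded One_nat_def [symmetric]])
    also have "\<dots> = (\<Sum>n<L * K. g n)"
      unfolding g_def by (intro sum.cong refl cesaro_powr_mult_powr[OF _ nonneg, symmetric]) simp_all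
    also have "\<dots> \<le> suminf g"
      by (rule sum_le_suminf) (use summable_cesaro in \<open>auto simp: g_def\<close>)
    finally show ?thesis .
  qed
  have "rzeta (p - a) * (\<Sum>k<K. f k) \<le> suminf g" for K
  proof (rule LIMSEQ_le_const2)
    show "(\<lambda>L. (\<Sum>m=1..L. real m powr (a - p)) * (\<Sum>k<K. f k)) \<longlonglongrightarrow> rzeta (p - a) * (\<Sum>k<K. f k)"
      using rzeta_partial_sums[of "p - a"] assms(3) by (intro tendsto_mult tendsto_const) simp
  qed (use partial in blast)
  then have "rzeta (p - a) * suminf f \<le> suminf g"
    by (intro LIMSEQ_le_const2[OF tendsto_mult[OF tendsto_const summable_LIMSEQ[OF \<open>summable f\<close>]]])
      auto
  then show ?thesis by (simp add: f_def g_def)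
qed

lemma wnorm_le_cesaro:
  fixes x :: "nat \<Rightarrow> real" and a p :: real
  assumes "1 < p" "0 \<le> a" "a < p - 1" "admissible p a x"
  shows "wnorm p a x \<le> ereal (1 / rzeta (p - a) powr (1 / p)) * wnorm p a (cesaro x)"
proof (cases "summable (\<lambda>n. \<bar>cesaro x (Suc n)\<bar> powr p * real (Suc n) powr a)")
  case False
  then show ?thesis using rzeta_pos[of "p - a"] assms(3) by (simp add: wnorm_def)
next
  case True
  define F where "F = (\<Sum>n. x (Suc n) powr p * real (Suc n) powr a)"
  define G where "G = (\<Sum>n. \<bar>cesaro x (Suc n)\<bar> powr p * real (Suc n) powr a)"
  have \<zeta>: "0 < rzeta (p - a)" using rzeta_pos assms(3) by simp
  have summable: "summable (\<lambda>n. x (Suc n) powr p * real (Suc n) powr a)"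
    and nonneg: "\<forall>n\<ge>1. 0 \<le> x n"
    using assms(4) by (auto simp: admissible_def)
  then have "(\<lambda>n. \<bar>x (Suc n)\<bar> powr p * real (Suc n) powr a)
      = (\<lambda>n. x (Suc n) powr p * real (Suc n) powr a)"
    by simp
  then have wx: "wnorm p a x = ereal (F powr (1 / p))"
    unfolding wnorm_def F_def using summable by simp
  have "0 \<le> F"
    unfolding F_def by (intro suminf_nonneg summable) simp
  have "rzeta (p - a) * F \<le> G"
    unfolding F_def G_def by (rule rzeta_mult_suminf_le_cesaro[OF assms True])
  then have "F powr (1 / p) \<le> (G / rzeta (p - a)) powr (1 / p)"
    using \<zeta> \<open>0 \<le> F\<close> assms(1) by (intro powr_mono2) (auto simp: field_simps)
  also have "\<dots> = 1 / rzeta (p - a) powr (1 / p) * G powr (1 / p)"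
    using \<zeta> \<open>0 \<le> F\<close> \<open>rzeta (p - a) * F \<le> G\<close> by (simp add: powr_divide)
  finally show ?thesis
    unfolding wx using True by (simp add: wnorm_def G_def)
qed

lemma admissible_unit: "admissible p a (\<lambda>n. if n = 1 then 1 else 0)"
proof -
  have "(\<lambda>n. (if Suc n = 1 then 1 else 0 :: real) powr p * real (Suc n) powr a)
      = (\<lambda>n. if n = 0 then 1 else 0)"
    by auto
  then show ?thesis by (simp add: admissible_def)
qed

lemma wnorm_unit: "wnorm p a (\<lambda>n. if n = 1 then 1 else 0) = 1"
proof -
  have "(\<lambda>n. \<bar>if Suc n = 1 then 1 else 0 :: real\<bar> powr p * real (Suc n) powr a)
      = (\<lambda>n. if n = 0 then 1 else 0)"
    by auto
  moreover have "(\<lambda>n. if n = 0 then 1 else 0) sums (1 :: real)"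
    using sums_single[of 0 "\<lambda>_. 1 :: real"] by simp
  ultimately show ?thesis by (simp add: wnorm_def sums_iff)
qed

lemma wnorm_cesaro_unit:
  assumes "1 < p - a"
  shows "wnorm p a (cesaro (\<lambda>n. if n = 1 then 1 else 0)) = ereal (rzeta (p - a) powr (1 / p))"
proof -
  have "cesaro (\<lambda>n. if n = 1 then 1 else 0) (Suc n) = 1 / real (Suc n)" for n
    by (simp add: cesaro_def sum.delta)
  then have "(\<lambda>n. \<bar>cesaro (\<lambda>n. if n = 1 then 1 else 0) (Suc n)\<bar> powr p * real (Suc n) powr a)
      = (\<lambda>n. 1 / real (Suc n) powr (p - a))"
    by (simp add: powr_divide powr_diff)
  then show ?thesis
    using summable_rzeta[OF assms] by (simp add: wnorm_def rzeta_def)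
qed

theorem theorem3p5:
  fixes p a :: real
  assumes "p > 1" and "0 \<le> a" and "a < p - 1"
  shows "(\<forall>x. admissible p a x \<longrightarrow>
            wnorm p a x \<le> ereal (1 / rzeta (p - a) powr (1 / p)) * wnorm p a (cesaro x))
       \<and> (\<forall>c::real. (\<forall>x. admissible p a x \<longrightarrow> wnorm p a x \<le> ereal c * wnorm p a (cesaro x))
            \<longrightarrow> 1 / rzeta (p - a) powr (1 / p) \<le> c)
       \<and> admissible p a (\<lambda>n. if n = 1 then 1 else 0)
       \<and> wnorm p a (\<lambda>n. if n = 1 then 1 else 0)
           = ereal (1 / rzeta (p - a) powr (1 / p)) * wnorm p a (cesaro (\<lambda>n. if n = 1 then 1 else 0))"
proof -
  have \<zeta>: "0 < rzeta (p - a)" using rzeta_pos assms(3) by simp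
  have cesaro_unit: "wnorm p a (cesaro (\<lambda>n. if n = 1 then 1 else 0)) = ereal (rzeta (p - a) powr (1 / p))"
    using wnorm_cesaro_unit assms(3) by simp
  have optimal: "1 / rzeta (p - a) powr (1 / p) \<le> c"
    if "\<forall>x. admissible p a x \<longrightarrow> wnorm p a x \<le> ereal c * wnorm p a (cesaro x)" for c
  proof -
    have "ereal 1 \<le> ereal c * ereal (rzeta (p - a) powr (1 / p))"
      using that admissible_unit wnorm_unit cesaro_unit by (metis one_ereal_def)
    then show ?thesis using \<zeta> by (simp add: field_simps)
  qed
  have extremal: "wnorm p a (\<lambda>n. if n = 1 then 1 else 0)
      = ereal (1 / rzeta (p - a) powr (1 / p)) * wnorm p a (cesaro (\<lambda>n. if n = 1 then 1 else 0))"
    unfolding wnorm_unit cesaro_unit using \<zeta> by simp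
  show ?thesis
    using wnorm_le_cesaro[OF assms] optimal admissible_unit extremal by blast
qed

end
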